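(* Let $G=(V,E)$ be a finite simple strongly connected directed graph. Then the polynomial $\det(L)$ divides $\det(\mathcal L)$.
   Context: $x_e$ ($e\in E$), $y_v$ ($v\in V$) are indeterminates; $Q_{vw}=x_e$ for an edge $e$ from $v\neq w$ to $w$ (else $0$), $Q_{vv}=-\sum_{s(e)=v}x_e$; $L=Q+\mathrm{diag}(y_v)$. A spanning tree of $G$ is a subgraph on all vertices with no cycle, one vertex (root) of outdegree $0$ and all others of outdegree $1$. The tree graph $\mathcal TG$: vertices are spanning trees; for a tree $\mathbf a$ rooted at $r$ and $e$ with $s(e)=r$, adding $e$ and deleting the edge of $\mathbf a$ going out of $t(e)$ gives a tree $\mathbf b$ and an edge $\mathbf a\to\mathbf b$ of weight $x_e$. $\mathcal L$ is the matrix indexed by spanning trees with $\mathcal L_{\mathbf a\mathbf b}=x_e$ for such edges, $0$ for other off-diagonal entries, and $\mathcal L_{\mathbf a\mathbf a}=-\sum_{s(e)=r}x_e+y_r$, $r$ the root of $\mathbf a$. *)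

theory Defs
  imports "HOL-Library.Poly_Mapping" "HOL-Combinatorics.Permutations"
begin

text \<open>Multivariate polynomials with integer coefficients in the indeterminates
  x_e (e an edge, encoded as Inl e) and y_v (v a vertex, encoded as Inr v):
  finitely supported maps from monomials (finitely supported exponent vectors)
  to coefficients.\<close>

type_synonym 'v gpoly = "((('v \<times> 'v) + 'v) \<Rightarrow>\<^sub>0 nat) \<Rightarrow>\<^sub>0 int"

definition Xv :: "('v \<times> 'v) \<Rightarrow> 'v gpoly" where
  "Xv e = Poly_Mapping.single (Poly_Mapping.single (Inl e) 1) 1"

definition Yv :: "'v \<Rightarrow> 'v gpoly" where
  "Yv v = Poly_Mapping.single (Poly_Mapping.single (Inr v) 1) 1"

definition det_on :: "'i set \<Rightarrow> ('i \<Rightarrow> 'i \<Rightarrow> 'a::comm_ring_1) \<Rightarrow> 'a" where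
  "det_on S A = (\<Sum>p\<in>{p. p permutes S}. of_int (sign p) * (\<Prod>i\<in>S. A i (p i)))"

definition simple_digraph :: "'v set \<Rightarrow> ('v \<times> 'v) set \<Rightarrow> bool" where
  "simple_digraph V E \<longleftrightarrow> finite V \<and> E \<subseteq> V \<times> V \<and> (\<forall>v. (v, v) \<notin> E)"

definition strongly_connected :: "'v set \<Rightarrow> ('v \<times> 'v) set \<Rightarrow> bool" where
  "strongly_connected V E \<longleftrightarrow> (\<forall>v\<in>V. \<forall>w\<in>V. (v, w) \<in> E\<^sup>*)"

definition Lmat :: "'v set \<Rightarrow> ('v \<times> 'v) set \<Rightarrow> 'v \<Rightarrow> 'v \<Rightarrow> 'v gpoly" where
  "Lmat V E v w =
     (if v = w then - (\<Sum>e\<in>{e\<in>E. fst e = v}. Xv e) + Yv v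
      else if (v, w) \<in> E then Xv (v, w) else 0)"

definition is_spanning_tree :: "'v set \<Rightarrow> ('v \<times> 'v) set \<Rightarrow> ('v \<times> 'v) set \<Rightarrow> bool" where
  "is_spanning_tree V E T \<longleftrightarrow> T \<subseteq> E \<and> acyclic T \<and>
     (\<exists>r\<in>V. {e\<in>T. fst e = r} = {} \<and> (\<forall>v\<in>V. v \<noteq> r \<longrightarrow> card {e\<in>T. fst e = v} = 1))"

definition spanning_trees :: "'v set \<Rightarrow> ('v \<times> 'v) set \<Rightarrow> ('v \<times> 'v) set set" where
  "spanning_trees V E = {T. is_spanning_tree V E T}"

definition tree_root :: "'v set \<Rightarrow> ('v \<times> 'v) set \<Rightarrow> 'v" where
  "tree_root V T = (THE r. r \<in> V \<and> {e\<in>T. fst e = r} = {})"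

text \<open>Tree graph move: add e (with s(e) = root of a) and delete the edge of a
  going out of t(e).\<close>

definition tree_move :: "'v set \<Rightarrow> ('v \<times> 'v) set \<Rightarrow> ('v \<times> 'v) \<Rightarrow> ('v \<times> 'v) set" where
  "tree_move V a e = insert e (a - {d\<in>a. fst d = snd e})"

text \<open>Off the diagonal, the entry is x_e
  if b arises from a by the move along e, else 0 (the edge e is unique, being
  the edge from root a to root b; we write the entry as the sum over such e).\<close>

definition TLmat :: "'v set \<Rightarrow> ('v \<times> 'v) set \<Rightarrow> ('v \<times> 'v) set \<Rightarrow> ('v \<times> 'v) set \<Rightarrow> 'v gpoly" where
  "TLmat V E a b =
     (if a = b then - (\<Sum>e\<in>{e\<in>E. fst e = tree_root V a}. Xv e) + Yv (tree_root V a)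
      else (\<Sum>e\<in>{e\<in>E. fst e = tree_root V a \<and> b = tree_move V a e}. Xv e))"

end

theory Submission
  imports Defs "Jordan_Normal_Form.Determinant"
begin

text \<open>A move in the tree graph that leaves a tree rooted at r along the edge (r, w) produces a
  tree rooted at w. Hence summing a row of the tree-graph matrix over all trees with a fixed
  root w yields the entry L r w: the partition of spanning trees by their roots is an
  equitable partition with quotient matrix L, and strong connectivity makes every class
  nonempty. For any such partition, replacing the unit vector of one representative per class
  by the indicator vector of its class is a change of basis of determinant 1 that makes the
  matrix block triangular with the quotient matrix as a diagonal block; so det L divides the
  determinant of the tree-graph matrix.\<close>

section \<open>Determinants of matrices indexed by finite sets\<close>

lemma det_on_cong:
  assumes "\<And>i j. i \<in> S \<Longrightarrow> j \<in> S \<Longrightarrow> A i j = B i j"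
  shows "det_on S A = det_on S B"
  unfolding det_on_def
  by (intro sum.cong refl arg_cong2[where f="(*)"] prod.cong) (auto simp: assms permutes_in_image)

lemma det_on_reindex:
  assumes g: "bij_betw g T S" and "finite T"
  shows "det_on S M = det_on T (\<lambda>i j. M (g i) (g j))"
proof -
  define h where "h = inv_into T g"
  have h: "bij_betw h S T" and hg: "\<And>x. x \<in> T \<Longrightarrow> h (g x) = x" and gh: "\<And>y. y \<in> S \<Longrightarrow> g (h y) = y"
    using g by (auto simp: h_def bij_betw_inv_into bij_betw_inv_into_left bij_betw_inv_into_right)
  have inj: "inj_on g T"
    using g by (rule bij_betw_imp_inj_on)
  have summand: "of_int (sign (map_permutation T g p)) * (\<Prod>i\<in>S. M i (map_permutation T g p i))
      = of_int (sign p) * (\<Prod>i\<in>T. M (g i) (g (p i)))" if p: "p permutes T" for p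
  proof -
    have "(\<Prod>i\<in>S. M i (map_permutation T g p i)) = (\<Prod>i\<in>T. M (g i) (map_permutation T g p (g i)))"
      by (rule prod.reindex_bij_betw[OF g, symmetric])
    also have "\<dots> = (\<Prod>i\<in>T. M (g i) (g (p i)))"
      by (intro prod.cong refl) (simp add: map_permutation_apply[OF inj])
    finally show ?thesis
      using sign_map_permutation[OF inj p assms(2)] by (simp only:)
  qed
  show ?thesis
    unfolding det_on_def
  proof (rule sym, rule sum.reindex_bij_witness[of _ "map_permutation S h" "map_permutation T g"])
    fix q assume "q \<in> {q. q permutes S}"
    then have q: "q permutes S" by simp
    show "map_permutation T g (map_permutation S h q) = q"
      by (rule map_permutation_compose_inv[OF h q gh])
    show "map_permutation S h q \<in> {p. p permutes T}"
      using map_permutation_permutes[OF h q] by simp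
  next
    fix p assume "p \<in> {p. p permutes T}"
    then have p: "p permutes T" by simp
    show "map_permutation S h (map_permutation T g p) = p"
      by (rule map_permutation_compose_inv[OF g p hg])
    show "map_permutation T g p \<in> {q. q permutes S}"
      using map_permutation_permutes[OF g p] by simp
    show "of_int (sign (map_permutation T g p)) * (\<Prod>i\<in>S. M i (map_permutation T g p i))
        = of_int (sign p) * (\<Prod>i\<in>T. M (g i) (g (p i)))"
      by (rule summand[OF p])
  qed
qed

lemma det_on_nat_eq_det: "det_on {0..<n} M = det (mat n n (\<lambda>(i, j). M i j))"
proof -
  have "det (mat n n (\<lambda>(i, j). M i j)) = (\<Sum>p | p permutes {0..<n}.
      signof p * (\<Prod>i = 0..<n. mat n n (\<lambda>(i, j). M i j) $$ (i, p i)))"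
    by (rule det_def') simp
  also have "\<dots> = det_on {0..<n} M"
    unfolding det_on_def
    by (intro sum.cong refl arg_cong2[where f="(*)"] prod.cong) (auto simp: permutes_in_image)
  finally show ?thesis by simp
qed

lemma det_on_mult:
  assumes "finite S"
  shows "det_on S (\<lambda>i j. \<Sum>k\<in>S. A i k * B k j) = det_on S A * det_on S B"
proof -
  define n where "n = card S"
  obtain g where g: "bij_betw g {0..<n} S"
    using ex_bij_betw_nat_finite[OF assms] unfolding n_def by blast
  have as_det: "det_on S M = det (mat n n (\<lambda>(i, j). M (g i) (g j)))" for M
  proof -
    have "det_on S M = det_on {0..<n} (\<lambda>i j. M (g i) (g j))"
      by (rule det_on_reindex[OF g]) simp
    then show ?thesis
      by (simp only: det_on_nat_eq_det)
  qed
  define MA where "MA = mat n n (\<lambda>(i, j). A (g i) (g j))"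
  define MB where "MB = mat n n (\<lambda>(i, j). B (g i) (g j))"
  have "MA * MB = mat n n (\<lambda>(i, j). \<Sum>k\<in>S. A (g i) k * B k (g j))"
  proof (rule eq_matI)
    fix i j assume "i < dim_row (mat n n (\<lambda>(i, j). \<Sum>k\<in>S. A (g i) k * B k (g j)))"
      and "j < dim_col (mat n n (\<lambda>(i, j). \<Sum>k\<in>S. A (g i) k * B k (g j)))"
    then have ij: "i < n" "j < n" by simp_all
    have "(MA * MB) $$ (i, j) = (\<Sum>k\<in>{0..<n}. A (g i) (g k) * B (g k) (g j))"
      using ij by (simp add: MA_def MB_def scalar_prod_def)
    also have "\<dots> = (\<Sum>k\<in>S. A (g i) k * B k (g j))"
      by (rule sum.reindex_bij_betw[OF g])
    finally show "(MA * MB) $$ (i, j) = mat n n (\<lambda>(i, j). \<Sum>k\<in>S. A (g i) k * B k (g j)) $$ (i, j)"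
      using ij by simp
  qed (simp_all add: MA_def MB_def)
  then show ?thesis
    unfolding as_det MA_def[symmetric] MB_def[symmetric]
    by (metis MA_def MB_def det_mult mat_carrier)
qed

lemma det_on_one:
  assumes "finite S"
  shows "det_on S (\<lambda>i j. if i = j then 1 else 0) = (1 :: 'a :: comm_ring_1)"
proof -
  have "of_int (sign p) * (\<Prod>i\<in>S. if i = p i then 1 else 0) = (if p = id then 1 else 0 :: 'a)"
    if p: "p permutes S" for p
  proof (cases "p = id")
    case False
    then obtain x where "p x \<noteq> x" by (auto simp: fun_eq_iff)
    moreover from this have "x \<in> S" using p permutes_not_in by metis
    ultimately have "(\<Prod>i\<in>S. if i = p i then 1 else 0) = (0 :: 'a)"
      using assms by (intro prod_zero) (auto intro!: bexI[of _ x])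
    then show ?thesis
      using False by simp
  qed simp
  then have "det_on S (\<lambda>i j. if i = j then 1 else 0) = (\<Sum>p | p permutes S. if p = id then 1 else 0 :: 'a)"
    unfolding det_on_def by (intro sum.cong) auto
  also have "\<dots> = 1"
    using assms by (simp add: finite_permutations sum.delta')
  finally show ?thesis .
qed

lemma permutes_compose_disjoint:
  assumes p: "p permutes A" and q: "q permutes B" and "A \<inter> B = {}"
  shows "p \<circ> q permutes A \<union> B" "restrict_id (p \<circ> q) A = p" "restrict_id (p \<circ> q) B = q"
proof -
  have qA: "q x = x" if "x \<in> A" for x
    using that q assms(3) by (metis disjoint_iff permutes_not_in)
  have pB: "p (q x) = q x" if "x \<in> B" for x
    using that p q assms(3) by (metis disjoint_iff permutes_in_image permutes_not_in)
  show "p \<circ> q permutes A \<union> B"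
    using p q by (intro permutes_compose) (auto intro: permutes_subset)
  show "restrict_id (p \<circ> q) A = p"
    using p qA by (auto simp: fun_eq_iff restrict_id_def permutes_not_in)
  show "restrict_id (p \<circ> q) B = q"
    using q pB by (auto simp: fun_eq_iff restrict_id_def permutes_not_in)
qed

lemma permutes_Un_split:
  assumes r: "r permutes A \<union> B" and "A \<inter> B = {}" "finite B" and "r ` B \<subseteq> B"
  shows "restrict_id r A permutes A" "restrict_id r B permutes B"
    "restrict_id r A \<circ> restrict_id r B = r"
proof -
  have inj: "inj r" using r by (rule permutes_inj)
  have rB: "r ` B = B"
    using endo_inj_surj[OF assms(3,4)] inj inj_on_subset by blast
  have "r ` A = r ` (A \<union> B) - r ` B"
    using inj assms(2) by (auto simp: inj_on_def)
  then have rA: "r ` A = A"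
    using rB assms(2) permutes_image[OF r] by auto
  show "restrict_id r A permutes A" "restrict_id r B permutes B"
    using inj_on_subset[OF inj] rA rB by (auto intro!: permutes_restrict_id simp: bij_betw_def)
  show "restrict_id r A \<circ> restrict_id r B = r"
  proof
    fix x
    show "(restrict_id r A \<circ> restrict_id r B) x = r x"
      using rB assms(2) r by (cases "x \<in> A \<union> B") (auto simp: permutes_not_in restrict_id_def)
  qed
qed

lemma det_on_block_triangular:
  assumes finA: "finite A" and finB: "finite B" and disj: "A \<inter> B = {}"
    and zero: "\<And>i j. i \<in> B \<Longrightarrow> j \<in> A \<Longrightarrow> M i j = 0"
  shows "det_on (A \<union> B) M = det_on A M * det_on B M"
proof -
  let ?t = "\<lambda>S p. of_int (sign p) * (\<Prod>i\<in>S. M i (p i))"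
  define P where "P = {r. r permutes A \<union> B \<and> r ` B \<subseteq> B}"
  have vanish: "?t (A \<union> B) r = 0" if r: "r permutes A \<union> B" and not_B: "\<not> r ` B \<subseteq> B" for r
  proof -
    obtain i where i: "i \<in> B" "r i \<notin> B"
      using not_B by auto
    then have "r i \<in> A"
      using permutes_in_image[OF r] by auto
    then have "(\<Prod>i\<in>A \<union> B. M i (r i)) = 0"
      using i zero finA finB by (intro prod_zero) auto
    then show ?thesis by simp
  qed
  have compose: "?t (A \<union> B) (p \<circ> q) = ?t A p * ?t B q"
    if p: "p permutes A" and q: "q permutes B" for p q
  proof -
    note pq = permutes_compose_disjoint[OF p q disj]
    have "sign (p \<circ> q) = sign p * sign q"
      using p q finA finB by (simp add: sign_compose permutes_imp_permutation)
    moreover have "(p \<circ> q) i = p i" if "i \<in> A" for i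
      using that fun_cong[OF pq(2), of i] by simp
    moreover have "(p \<circ> q) i = q i" if "i \<in> B" for i
      using that fun_cong[OF pq(3), of i] by simp
    ultimately show ?thesis
      using finA finB disj by (simp add: prod.union_disjoint del: o_apply)
  qed
  have "det_on (A \<union> B) M = sum (?t (A \<union> B)) P"
    unfolding det_on_def P_def using vanish
    by (intro sum.mono_neutral_right) (auto simp: finA finB finite_permutations)
  also have "\<dots> = (\<Sum>(p, q) \<in> {p. p permutes A} \<times> {q. q permutes B}. ?t (A \<union> B) (p \<circ> q))"
  proof (rule sum.reindex_bij_witness[of _ "\<lambda>(p, q). p \<circ> q" "\<lambda>r. (restrict_id r A, restrict_id r B)"])
    fix r assume "r \<in> P"
    then have r: "r permutes A \<union> B" "r ` B \<subseteq> B" by (auto simp: P_def)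
    note split = permutes_Un_split[OF r(1) disj finB r(2)]
    show "(case (restrict_id r A, restrict_id r B) of (p, q) \<Rightarrow> p \<circ> q) = r"
      using split(3) by simp
    show "(restrict_id r A, restrict_id r B) \<in> {p. p permutes A} \<times> {q. q permutes B}"
      using split(1,2) by simp
    show "(case (restrict_id r A, restrict_id r B) of (p, q) \<Rightarrow> ?t (A \<union> B) (p \<circ> q)) = ?t (A \<union> B) r"
      using split(3) by (simp del: o_apply)
  next
    fix pq assume "pq \<in> {p. p permutes A} \<times> {q. q permutes B}"
    then obtain p q where pq: "pq = (p, q)" and p: "p permutes A" and q: "q permutes B" by auto
    note comp = permutes_compose_disjoint[OF p q disj]
    show "(restrict_id (case pq of (p, q) \<Rightarrow> p \<circ> q) A, restrict_id (case pq of (p, q) \<Rightarrow> p \<circ> q) B) = pq"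
      using comp(2,3) pq by simp
    have "(p \<circ> q) ` B \<subseteq> B"
      using comp(3) q by (metis image_comp image_cong permutes_image restrict_id_simps(1) subset_refl)
    then show "(case pq of (p, q) \<Rightarrow> p \<circ> q) \<in> P"
      using comp(1) pq by (simp add: P_def)
  qed
  also have "\<dots> = det_on A M * det_on B M"
    unfolding det_on_def sum_product sum.cartesian_product
    by (intro sum.cong refl) (auto simp: compose simp del: o_apply)
  finally show ?thesis .
qed

section \<open>Equitable partitions\<close>

definition class_basis :: "'i set \<Rightarrow> ('i \<Rightarrow> 'j) \<Rightarrow> 'i \<Rightarrow> 'i \<Rightarrow> 'a :: comm_ring_1" where
  "class_basis R f a b = (if b \<in> R then (if f a = f b then 1 else 0) else (if a = b then 1 else 0))"

lemma det_on_class_basis: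
  assumes finS: "finite S" and RS: "R \<subseteq> S" and inj: "inj_on f R"
  shows "det_on S (class_basis R f) = 1"
proof -
  have finR: "finite R" and finSR: "finite (S - R)"
    using finS RS by (auto intro: finite_subset)
  have "det_on ((S - R) \<union> R) (class_basis R f) = det_on (S - R) (class_basis R f) * det_on R (class_basis R f)"
    by (rule det_on_block_triangular[OF finSR finR]) (auto simp: class_basis_def)
  then have "det_on S (class_basis R f) = det_on (S - R) (class_basis R f) * det_on R (class_basis R f)"
    using RS by (simp add: Un_absorb2)
  also have "det_on (S - R) (class_basis R f) = det_on (S - R) (\<lambda>i j. if i = j then 1 else 0)"
    by (rule det_on_cong) (simp add: class_basis_def)
  also have "det_on R (class_basis R f) = det_on R (\<lambda>i j. if i = j then 1 else 0)"
    by (rule det_on_cong) (use inj in \<open>auto simp: class_basis_def inj_on_eq_iff\<close>)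
  finally show ?thesis
    by (simp add: det_on_one finR finSR)
qed

lemma sum_mult_class_basis_right:
  assumes finS: "finite S" and b: "b \<in> S"
  shows "(\<Sum>a\<in>S. M c a * class_basis R f a b)
    = (if b \<in> R then (\<Sum>a | a \<in> S \<and> f a = f b. M c a) else M c b)"
proof (cases "b \<in> R")
  case True
  then have "(\<Sum>a\<in>S. M c a * class_basis R f a b) = (\<Sum>a\<in>S. if f a = f b then M c a else 0)"
    by (intro sum.cong refl) (simp add: class_basis_def)
  then show ?thesis
    using True by (simp add: sum.inter_filter[OF finS])
next
  case False
  then have "(\<Sum>a\<in>S. M c a * class_basis R f a b) = (\<Sum>a\<in>S. if a = b then M c a else 0)"
    by (intro sum.cong refl) (simp add: class_basis_def)
  then show ?thesis
    using False b finS by (simp add: sum.delta')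
qed

lemma sum_class_basis_mult_left:
  fixes X :: "'i \<Rightarrow> 'a :: comm_ring_1"
  assumes finS: "finite S" and RS: "R \<subseteq> S" and inj: "inj_on f R"
    and c: "c \<in> S" and r: "r \<in> R" "f r = f c"
  shows "(\<Sum>a\<in>S. class_basis R f c a * X a) = X r + (if c \<in> R then 0 else X c)"
proof -
  have "class_basis R f c a = (if a = r then 1 else 0) + (if a = c \<and> c \<notin> R then 1 else (0 :: 'a))" for a
  proof (cases "a \<in> R")
    case True
    then have "f c = f a \<longleftrightarrow> a = r"
      using inj_on_eq_iff[OF inj True r(1)] r(2) by auto
    then show ?thesis
      using True by (auto simp: class_basis_def)
  next
    case False
    then show ?thesis
      using r(1) by (auto simp: class_basis_def)
  qed
  then have "(\<Sum>a\<in>S. class_basis R f c a * X a)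
      = (\<Sum>a\<in>S. (if a = r then X a else 0) + (if a = c \<and> c \<notin> R then X a else 0))"
    by (intro sum.cong refl) (simp add: distrib_right)
  also have "\<dots> = (\<Sum>a\<in>S. if a = r then X a else 0) + (\<Sum>a\<in>S. if a = c \<and> c \<notin> R then X a else 0)"
    by (rule sum.distrib)
  also have "\<dots> = X r + (if c \<in> R then 0 else X c)"
    using r RS c finS by (simp add: sum.delta' subsetD)
  finally show ?thesis .
qed

text \<open>With one representative g v chosen in each class, the change of basis
  class_basis (g ` V) f makes M block triangular, with N as one diagonal block.\<close>

lemma det_on_quotient_dvd:
  fixes M :: "'i \<Rightarrow> 'i \<Rightarrow> 'a :: comm_ring_1" and N :: "'j \<Rightarrow> 'j \<Rightarrow> 'a"
  assumes finS: "finite S"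
    and f: "\<And>a. a \<in> S \<Longrightarrow> f a \<in> V"
    and g: "\<And>v. v \<in> V \<Longrightarrow> g v \<in> S" "\<And>v. v \<in> V \<Longrightarrow> f (g v) = v"
    and equitable: "\<And>c v. c \<in> S \<Longrightarrow> v \<in> V \<Longrightarrow> (\<Sum>a | a \<in> S \<and> f a = v. M c a) = N (f c) v"
  shows "det_on V N dvd det_on S M"
proof -
  define R where "R = g ` V"
  define U where "U = (class_basis R f :: 'i \<Rightarrow> 'i \<Rightarrow> 'a)"
  define B where "B a b = (if b \<in> R then (if a \<in> R then N (f a) (f b) else 0)
      else M a b - (if a \<in> R then 0 else M (g (f a)) b))" for a b
  have RS: "R \<subseteq> S" and rep: "\<And>a. a \<in> R \<Longrightarrow> g (f a) = a"
    using g by (auto simp: R_def)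
  have inj: "inj_on f R"
    using rep by (rule inj_on_inverseI)
  have finR: "finite R" and finSR: "finite (S - R)"
    using finS RS by (auto intro: finite_subset)
  have bij: "bij_betw g V R"
    unfolding R_def bij_betw_def by (metis g(2) inj_on_inverseI)
  have finV: "finite V"
    using bij finR bij_betw_finite by blast
  have intertwine: "(\<Sum>a\<in>S. M c a * U a b) = (\<Sum>a\<in>S. U c a * B a b)"
    if c: "c \<in> S" and b: "b \<in> S" for c b
  proof -
    have gfc: "g (f c) \<in> R" "f (g (f c)) = f c"
      using f[OF c] g(2) by (auto simp: R_def)
    have "(\<Sum>a\<in>S. U c a * B a b) = B (g (f c)) b + (if c \<in> R then 0 else B c b)"
      unfolding U_def using gfc by (rule sum_class_basis_mult_left[OF finS RS inj c])
    also have "\<dots> = (if b \<in> R then N (f c) (f b) else M c b)"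
      using gfc rep[of c] by (simp add: B_def)
    also have "\<dots> = (\<Sum>a\<in>S. M c a * U a b)"
      using c f[OF b] by (simp add: U_def sum_mult_class_basis_right[OF finS b] equitable)
    finally show ?thesis by (rule sym)
  qed
  have "det_on S M * det_on S U = det_on S (\<lambda>c b. \<Sum>a\<in>S. M c a * U a b)"
    by (rule det_on_mult[OF finS, symmetric])
  also have "\<dots> = det_on S (\<lambda>c b. \<Sum>a\<in>S. U c a * B a b)"
    by (rule det_on_cong) (rule intertwine)
  also have "\<dots> = det_on S U * det_on S B"
    by (rule det_on_mult[OF finS])
  finally have "det_on S M * det_on S U = det_on S U * det_on S B" .
  moreover have "det_on S U = 1"
    unfolding U_def using finS RS inj by (rule det_on_class_basis)
  moreover have "det_on S B = det_on V N * det_on (S - R) B"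
  proof -
    have "det_on (R \<union> (S - R)) B = det_on R B * det_on (S - R) B"
      by (rule det_on_block_triangular[OF finR finSR]) (auto simp: B_def)
    then have "det_on S B = det_on R B * det_on (S - R) B"
      using RS by (simp add: Un_absorb1)
    also have "det_on R B = det_on R (\<lambda>a b. N (f a) (f b))"
      by (rule det_on_cong) (simp add: B_def)
    also have "\<dots> = det_on V (\<lambda>i j. N (f (g i)) (f (g j)))"
      by (rule det_on_reindex[OF bij finV])
    also have "\<dots> = det_on V N"
      by (rule det_on_cong) (simp add: g(2))
    finally show ?thesis .
  qed
  ultimately have "det_on S M = det_on V N * det_on (S - R) B"
    by simp
  then show ?thesis ..
qed

section \<open>Spanning trees and the tree graph\<close>

lemma tree_root_eqI:
  assumes T: "is_spanning_tree V E T" and r: "r \<in> V" "{e\<in>T. fst e = r} = {}"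
  shows "tree_root V T = r"
proof -
  obtain r0 where "r0 \<in> V"
    and one: "\<And>v. v \<in> V \<Longrightarrow> v \<noteq> r0 \<Longrightarrow> card {e\<in>T. fst e = v} = 1"
    using T unfolding is_spanning_tree_def by blast
  then have unique: "x = r0" if "x \<in> V" "{e\<in>T. fst e = x} = {}" for x
    using one[of x] that by (metis card.empty zero_neq_one)
  show ?thesis
    unfolding tree_root_def
    by (rule the_equality) (use r unique[OF r] unique in blast)+
qed

lemma spanning_tree_root:
  assumes T: "is_spanning_tree V E T"
  shows "tree_root V T \<in> V" "{e\<in>T. fst e = tree_root V T} = {}"
    "\<And>v. v \<in> V \<Longrightarrow> v \<noteq> tree_root V T \<Longrightarrow> card {e\<in>T. fst e = v} = 1"
proof -
  obtain r where r: "r \<in> V" "{e\<in>T. fst e = r} = {}"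
    and one: "\<And>v. v \<in> V \<Longrightarrow> v \<noteq> r \<Longrightarrow> card {e\<in>T. fst e = v} = 1"
    using T unfolding is_spanning_tree_def by blast
  moreover have "tree_root V T = r"
    using tree_root_eqI[OF T r] .
  ultimately show "tree_root V T \<in> V" "{e\<in>T. fst e = tree_root V T} = {}"
    "\<And>v. v \<in> V \<Longrightarrow> v \<noteq> tree_root V T \<Longrightarrow> card {e\<in>T. fst e = v} = 1"
    by auto
qed

lemma finite_spanning_trees:
  assumes "simple_digraph V E"
  shows "finite (spanning_trees V E)"
proof (rule finite_subset)
  show "spanning_trees V E \<subseteq> Pow E"
    by (auto simp: spanning_trees_def is_spanning_tree_def)
  show "finite (Pow E)"
    using assms finite_subset by (auto simp: simple_digraph_def)
qed

text \<open>The new root w cannot reach the old root r in the remaining edges, as w has lost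
  its outgoing edge; so the added edge (r, w) closes no cycle.\<close>

lemma spanning_tree_tree_move:
  assumes G: "simple_digraph V E" and T: "is_spanning_tree V E T"
    and e: "e \<in> E" "fst e = tree_root V T"
  shows "is_spanning_tree V E (tree_move V T e)" "tree_root V (tree_move V T e) = snd e"
    "tree_move V T e \<noteq> T"
proof -
  define r where "r = tree_root V T"
  obtain w where ew: "e = (r, w)" using e r_def by (cases e) auto
  have wV: "w \<in> V" and rw: "r \<noteq> w"
    using G e ew unfolding simple_digraph_def by auto
  define R where "R = T - {d\<in>T. fst d = w}"
  have move: "tree_move V T e = insert (r, w) R"
    unfolding tree_move_def R_def ew by simp
  have rT: "{d\<in>T. fst d = r} = {}"
    using spanning_tree_root[OF T] r_def by auto
  have TE: "T \<subseteq> E" and acT: "acyclic T"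
    using T unfolding is_spanning_tree_def by auto
  have out: "{d\<in>insert (r, w) R. fst d = u} =
      (if u = r then {(r, w)} else if u = w then {} else {d\<in>T. fst d = u})" for u
    using rT rw unfolding R_def by auto
  have "acyclic R"
    using acT unfolding R_def by (rule acyclic_subset) auto
  moreover have "(w, x) \<in> R\<^sup>* \<Longrightarrow> x = w" for x
    by (erule converse_rtranclE) (auto simp: R_def)
  ultimately have ac: "acyclic (insert (r, w) R)"
    using rw by (auto simp: acyclic_def trancl_insert)
  have st: "is_spanning_tree V E (insert (r, w) R)"
    unfolding is_spanning_tree_def
  proof (intro conjI ac bexI[of _ w] ballI impI)
    show "insert (r, w) R \<subseteq> E"
      using TE e ew unfolding R_def by auto
    show "{d\<in>insert (r, w) R. fst d = w} = {}"
      using out[of w] rw by simp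
    show "card {d\<in>insert (r, w) R. fst d = v} = 1" if "v \<in> V" "v \<noteq> w" for v
      using out[of v] that spanning_tree_root(3)[OF T, of v] r_def by (cases "v = r") simp_all
  qed (rule wV)
  then show "is_spanning_tree V E (tree_move V T e)"
    using move by simp
  show "tree_root V (tree_move V T e) = snd e"
    using tree_root_eqI[OF st wV] out[of w] rw move ew by simp
  show "tree_move V T e \<noteq> T"
    using move rT by auto
qed

text \<open>Following, from every vertex, an edge that decreases the distance to v gives a
  spanning tree rooted at v.\<close>

lemma ex_spanning_tree_rooted_at:
  assumes sc: "strongly_connected V E" and v: "v \<in> V"
  shows "\<exists>T. is_spanning_tree V E T \<and> tree_root V T = v"
proof -
  define d where "d u = (LEAST n. (u, v) \<in> E ^^ n)" for u
  have dI: "(u, v) \<in> E ^^ d u" if "u \<in> V" for u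
  proof -
    have "(u, v) \<in> E\<^sup>*"
      using sc that v unfolding strongly_connected_def by blast
    then obtain n where "(u, v) \<in> E ^^ n"
      using rtrancl_power by blast
    then show ?thesis
      unfolding d_def by (rule LeastI)
  qed
  have closer: "\<exists>w. (u, w) \<in> E \<and> d w < d u" if "u \<in> V" "u \<noteq> v" for u
  proof -
    have path: "(u, v) \<in> E ^^ d u"
      using dI that by blast
    moreover have "d u \<noteq> 0"
      using path that by (metis relpow_0_E)
    ultimately obtain k where k: "d u = Suc k" "(u, v) \<in> E ^^ Suc k"
      by (metis not0_implies_Suc)
    then obtain w where w: "(u, w) \<in> E" "(w, v) \<in> E ^^ k"
      using relpow_Suc_D2 by metis
    have "d w \<le> k"
      unfolding d_def using w(2) by (rule Least_le)
    then show ?thesis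
      using w k by auto
  qed
  define next_vertex where "next_vertex u = (SOME w. (u, w) \<in> E \<and> d w < d u)" for u
  have next_vertex: "(u, next_vertex u) \<in> E \<and> d (next_vertex u) < d u" if "u \<in> V" "u \<noteq> v" for u
    unfolding next_vertex_def using someI_ex[OF closer[OF that]] .
  define T where "T = {(u, next_vertex u) | u. u \<in> V \<and> u \<noteq> v}"
  have "(x, y) \<in> T\<^sup>+ \<Longrightarrow> d y < d x" for x y
    by (induction rule: trancl_induct) (use next_vertex in \<open>fastforce simp: T_def\<close>)+
  then have "acyclic T"
    unfolding acyclic_def by blast
  moreover have "T \<subseteq> E"
    using next_vertex unfolding T_def by auto
  moreover have out_v: "{e\<in>T. fst e = v} = {}"
    unfolding T_def by auto
  moreover have "{e\<in>T. fst e = u} = {(u, next_vertex u)}" if "u \<in> V" "u \<noteq> v" for u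
    using that unfolding T_def by auto
  ultimately have st: "is_spanning_tree V E T"
    unfolding is_spanning_tree_def using v by (intro conjI bexI[of _ v]) auto
  show ?thesis
    using st tree_root_eqI[OF st v out_v] by blast
qed

lemma TLmat_sum_root_class:
  assumes G: "simple_digraph V E" and c: "c \<in> spanning_trees V E"
  shows "(\<Sum>a | a \<in> spanning_trees V E \<and> tree_root V a = v. TLmat V E c a)
    = Lmat V E (tree_root V c) v"
proof -
  define r where "r = tree_root V c"
  define Er where "Er = {e\<in>E. fst e = r}"
  define D where "D = - (\<Sum>e\<in>Er. Xv e) + Yv r"
  define C where "C = {a \<in> spanning_trees V E. tree_root V a = v}"
  have finEr: "finite Er" and noloop: "(v, v) \<notin> E"
    using G unfolding simple_digraph_def Er_def by (auto intro: finite_subset)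
  have finC: "finite C"
    using finite_spanning_trees[OF G] by (simp add: C_def)
  have cT: "is_spanning_tree V E c"
    using c by (simp add: spanning_trees_def)
  have move: "tree_move V c e \<in> C \<longleftrightarrow> snd e = v" "tree_move V c e \<noteq> c" if "e \<in> Er" for e
    using spanning_tree_tree_move[OF G cT, of e] that by (auto simp: Er_def r_def C_def spanning_trees_def)
  have entry: "TLmat V E c a = (if a = c then D else 0) + (\<Sum>e\<in>Er. if a = tree_move V c e then Xv e else 0)"
    for a
  proof (cases "a = c")
    case True
    have "(\<Sum>e\<in>Er. if c = tree_move V c e then Xv e else 0) = 0"
      using move(2) by (intro sum.neutral) (metis (full_types))
    then show ?thesis
      using True by (simp add: TLmat_def D_def Er_def r_def)
  next
    case False
    have "{e\<in>E. fst e = r \<and> a = tree_move V c e} = {e\<in>Er. a = tree_move V c e}"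
      by (auto simp: Er_def)
    then show ?thesis
      using False finEr by (simp add: TLmat_def r_def sum.inter_filter)
  qed
  have "(\<Sum>a\<in>C. TLmat V E c a)
      = (\<Sum>a\<in>C. if a = c then D else 0) + (\<Sum>e\<in>Er. \<Sum>a\<in>C. if a = tree_move V c e then Xv e else 0)"
    unfolding entry sum.distrib by (simp add: sum.swap[of _ C])
  also have "(\<Sum>a\<in>C. if a = c then D else 0) = (if r = v then D else 0)"
    using finC c by (simp add: sum.delta' C_def r_def)
  also have "(\<Sum>e\<in>Er. \<Sum>a\<in>C. if a = tree_move V c e then Xv e else 0)
      = (\<Sum>e\<in>Er. if e = (r, v) then Xv e else 0)"
    using finC move(1) by (intro sum.cong refl) (auto simp: sum.delta' Er_def)
  also have "\<dots> = (if (r, v) \<in> E then Xv (r, v) else 0)"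
    using finEr by (simp add: sum.delta' Er_def)
  finally show ?thesis
    using noloop by (simp add: C_def Lmat_def D_def Er_def r_def)
qed

theorem lemma4p2:
  fixes V :: "'v set" and E :: "('v \<times> 'v) set"
  assumes "simple_digraph V E"
    and "strongly_connected V E"
  shows "det_on V (Lmat V E) dvd det_on (spanning_trees V E) (TLmat V E)"
proof (rule det_on_quotient_dvd)
  show "finite (spanning_trees V E)"
    using finite_spanning_trees[OF assms(1)] .
  show "tree_root V a \<in> V" if "a \<in> spanning_trees V E" for a
    using spanning_tree_root(1) that by (auto simp: spanning_trees_def)
  define rooted_at where "rooted_at v = (SOME T. is_spanning_tree V E T \<and> tree_root V T = v)" for v
  have "is_spanning_tree V E (rooted_at v) \<and> tree_root V (rooted_at v) = v" if "v \<in> V" for v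
    unfolding rooted_at_def using someI_ex[OF ex_spanning_tree_rooted_at[OF assms(2) that]] .
  then show "rooted_at v \<in> spanning_trees V E" "tree_root V (rooted_at v) = v" if "v \<in> V" for v
    using that by (auto simp: spanning_trees_def)
  show "(\<Sum>a | a \<in> spanning_trees V E \<and> tree_root V a = v. TLmat V E c a)
      = Lmat V E (tree_root V c) v" if "c \<in> spanning_trees V E" for c v
    using TLmat_sum_root_class[OF assms(1) that] .
qed

end
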